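(* Let $p$ be a prime, $\sigma:\mathcal A_m\to\mathcal A_m^*$ a $p$-uniform morphism, $t\in\mathbb{N}^*$, $r=p^t$, and $\alpha\in\mathbb{F}_r$. Then for every positive integer $k$, $$M_{\sigma^{kt}}(\alpha)=\big(M_{\sigma^t}(\alpha)\big)^k.$$
   Context: $\mathcal A_m=\{0,\dots,m-1\}$. For $W=w_0\cdots w_{r'-1}\in\mathcal A_m^*$ and $j\in\mathcal A_m$, $\beta_{W,j}(T)=\sum_{i:\,w_i=j}T^{r'-1-i}\in\mathbb{F}_p[T]$ (zero if $j$ does not occur). For a uniform morphism $\tau$ on $\mathcal A_m$, $M_\tau(T)=(\beta_{\tau(i),j}(T))_{0\le i,j\le m-1}$, and $M_\tau(\alpha)$ is its evaluation at $T=\alpha$. *)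

theory Defs
  imports "HOL-Computational_Algebra.Polynomial" "Jordan_Normal_Form.Matrix"
begin

text \<open>Letters of A_m are naturals < m; words are lists. beta W j is the polynomial
  sum over positions i with w_i = j of T^(|W|-1-i), with integer (0/1) coefficients;
  its image in F_p[T] is obtained by reducing coefficients mod p, and evaluation at an
  element of a field of characteristic p is via the canonical map of_int.\<close>

definition beta :: "nat list \<Rightarrow> nat \<Rightarrow> int poly" where
  "beta W j = (\<Sum>i<length W. if W ! i = j then monom 1 (length W - 1 - i) else 0)"

definition uniform_morphism :: "nat \<Rightarrow> nat \<Rightarrow> (nat \<Rightarrow> nat list) \<Rightarrow> bool" where
  "uniform_morphism m q \<sigma> \<longleftrightarrow> (\<forall>i<m. length (\<sigma> i) = q \<and> set (\<sigma> i) \<subseteq> {..<m})"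

definition morph_word :: "(nat \<Rightarrow> nat list) \<Rightarrow> nat list \<Rightarrow> nat list" where
  "morph_word \<sigma> w = concat (map \<sigma> w)"

definition morph_pow :: "(nat \<Rightarrow> nat list) \<Rightarrow> nat \<Rightarrow> nat \<Rightarrow> nat list" where
  "morph_pow \<sigma> n i = (morph_word \<sigma> ^^ n) [i]"

definition M_eval :: "nat \<Rightarrow> (nat \<Rightarrow> nat list) \<Rightarrow> 'a::comm_ring_1 \<Rightarrow> 'a mat" where
  "M_eval m \<tau> \<alpha> = mat m m (\<lambda>(i, j). poly (map_poly of_int (beta (\<tau> i) j)) \<alpha>)"

end

theory Submission
  imports Defs
begin

text \<open>Cut \<open>\<sigma>^(a+b)(i) = \<sigma>^a(\<sigma>^b(i))\<close> into the blocks \<open>\<sigma>^a(h)\<close>, each of length \<open>q^a\<close>,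
  one for every letter \<open>h\<close> of \<open>\<sigma>^b(i)\<close>. A block followed by \<open>n\<close> letters of \<open>\<sigma>^b(i)\<close>
  contributes its own polynomial times \<open>(x^(q^a))^n\<close>, which gives
  \<open>M_\<sigma>^(a+b)(x) = M_\<sigma>^b(x^(q^a)) M_\<sigma>^a(x)\<close>. In a field with \<open>r = p^t\<close> elements
  \<open>\<alpha>^r = \<alpha>\<close>, so for \<open>a = t\<close> the substitution disappears and the claim follows by
  induction on \<open>k\<close>.\<close>

lemma finite_field_pow_card:
  fixes x :: "'a::{field, finite}"
  shows "x ^ card (UNIV :: 'a set) = x"
proof (cases "x = 0")
  case True
  then show ?thesis by (simp add: power_0_left)
next
  case False
  let ?U = "UNIV - {0::'a}"
  have "bij_betw ((*) x) ?U ?U"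
    by (rule bij_betwI[where g = "(*) (inverse x)"]) (use False in auto)
  then have "(\<Prod>y\<in>?U. x * y) = (\<Prod>y\<in>?U. y)"
    using prod.reindex_bij_betw[of "(*) x" ?U ?U id] by simp
  then have "x ^ card ?U * (\<Prod>y\<in>?U. y) = 1 * (\<Prod>y\<in>?U. y)"
    by (simp add: prod.distrib)
  then have unit: "x ^ card ?U = 1"
    by (subst (asm) mult_cancel_right) simp
  have "card (UNIV :: 'a set) = Suc (card ?U)"
    using finite_UNIV_card_ge_0[where 'a = 'a] by (simp add: card_Diff_singleton)
  then show ?thesis
    by (simp only: power_Suc unit mult_1_right)
qed

fun word_eval :: "nat list \<Rightarrow> nat \<Rightarrow> 'a::comm_ring_1 \<Rightarrow> 'a" where
  "word_eval [] j x = 0"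
| "word_eval (a # W) j x = (if a = j then x ^ length W else 0) + word_eval W j x"

lemma beta_Cons: "beta (a # W) j = (if a = j then monom 1 (length W) else 0) + beta W j"
  unfolding beta_def length_Cons sum.lessThan_Suc_shift by (auto intro!: sum.cong)

lemma poly_beta: "poly (map_poly of_int (beta W j)) x = word_eval W j x"
proof (induction W)
  case Nil
  then show ?case by (simp add: beta_def)
next
  case (Cons a W)
  have "map_poly of_int (beta (a # W) j)
      = (if a = j then monom 1 (length W) else 0) + map_poly (of_int :: int \<Rightarrow> 'a) (beta W j)"
    unfolding beta_Cons by (intro poly_eqI) (simp add: coeff_map_poly coeff_monom)
  then show ?case using Cons by (simp add: poly_monom)
qed

lemma word_eval_append:
  "word_eval (U @ V) j x = x ^ length V * word_eval U j x + word_eval V j x"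
  by (induction U) (auto simp: algebra_simps power_add)

lemma word_eval_concat_uniform:
  assumes "set ws \<subseteq> {..<m}" and "\<And>h. h < m \<Longrightarrow> length (\<tau> h) = L"
  shows "word_eval (concat (map \<tau> ws)) j x
       = (\<Sum>h<m. word_eval ws h (x ^ L) * word_eval (\<tau> h) j x)"
  using assms(1)
proof (induction ws)
  case Nil
  then show ?case by simp
next
  case (Cons w ws)
  then have "w < m" by auto
  have "length (concat (map \<tau> ws)) = L * length ws"
    using Cons.prems assms(2) by (induction ws) auto
  moreover have "(\<Sum>h<m. (if w = h then (x ^ L) ^ length ws else 0) * word_eval (\<tau> h) j x)
      = (x ^ L) ^ length ws * word_eval (\<tau> w) j x"
    using \<open>w < m\<close> by (simp add: if_distrib[of "\<lambda>c. c * _"] sum.If_cases)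
  ultimately show ?case
    using Cons by (simp add: word_eval_append power_mult algebra_simps sum.distrib)
qed

lemma morph_word_concat: "morph_word \<sigma> (concat ws) = concat (map (morph_word \<sigma>) ws)"
  by (induction ws) (simp_all add: morph_word_def)

lemma morph_word_funpow: "(morph_word \<sigma> ^^ n) w = concat (map (morph_pow \<sigma> n) w)"
proof (induction n arbitrary: w)
  case 0
  then show ?case by (induction w) (simp_all add: morph_pow_def)
next
  case (Suc n)
  have "morph_pow \<sigma> (Suc n) = morph_word \<sigma> \<circ> morph_pow \<sigma> n"
    by (simp add: morph_pow_def fun_eq_iff)
  then show ?case by (simp add: Suc morph_word_concat comp_def)
qed

lemma morph_pow_add:
  "morph_pow \<sigma> (a + b) i = concat (map (morph_pow \<sigma> a) (morph_pow \<sigma> b i))"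
  unfolding morph_pow_def funpow_add by (simp add: morph_word_funpow flip: morph_pow_def)

lemma uniform_morphism_morph_pow:
  assumes "uniform_morphism m q \<sigma>"
  shows "uniform_morphism m (q ^ n) (morph_pow \<sigma> n)"
proof (induction n)
  case 0
  then show ?case by (simp add: uniform_morphism_def morph_pow_def)
next
  case (Suc n)
  have image: "set ws \<subseteq> {..<m} \<Longrightarrow>
      length (concat (map \<sigma> ws)) = q * length ws \<and> set (concat (map \<sigma> ws)) \<subseteq> {..<m}" for ws
    using assms by (induction ws) (auto simp: uniform_morphism_def)
  have "morph_pow \<sigma> (Suc n) i = concat (map \<sigma> (morph_pow \<sigma> n i))" for i
    by (simp add: morph_pow_def morph_word_def)
  then show ?case
    using Suc image unfolding uniform_morphism_def by simp
qed

lemma M_eval_carrier: "M_eval m \<tau> x \<in> carrier_mat m m"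
  by (simp add: M_eval_def)

lemma M_eval_index: "i < m \<Longrightarrow> j < m \<Longrightarrow> M_eval m \<tau> x $$ (i, j) = word_eval (\<tau> i) j x"
  by (simp add: M_eval_def poly_beta)

lemma M_eval_morph_pow_0: "M_eval m (morph_pow \<sigma> 0) x = 1\<^sub>m m"
  by (rule eq_matI) (auto simp: M_eval_def morph_pow_def beta_def)

lemma M_eval_concat_uniform:
  fixes x :: "'a::comm_ring_1"
  assumes "uniform_morphism m L \<tau>" and "\<And>i. i < m \<Longrightarrow> set (\<rho> i) \<subseteq> {..<m}"
  shows "M_eval m (\<lambda>i. concat (map \<tau> (\<rho> i))) x = M_eval m \<rho> (x ^ L) * M_eval m \<tau> x"
proof (rule eq_matI)
  fix i j
  assume "i < dim_row (M_eval m \<rho> (x ^ L) * M_eval m \<tau> x)"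
    and "j < dim_col (M_eval m \<rho> (x ^ L) * M_eval m \<tau> x)"
  then have i: "i < m" and j: "j < m" by (simp_all add: M_eval_def)
  have "word_eval (concat (map \<tau> (\<rho> i))) j x
      = (\<Sum>h<m. word_eval (\<rho> i) h (x ^ L) * word_eval (\<tau> h) j x)"
    using assms i by (intro word_eval_concat_uniform) (auto simp: uniform_morphism_def)
  also have "\<dots> = (M_eval m \<rho> (x ^ L) * M_eval m \<tau> x) $$ (i, j)"
    using i j by (simp add: M_eval_def scalar_prod_def poly_beta atLeast0LessThan)
  finally show "M_eval m (\<lambda>i. concat (map \<tau> (\<rho> i))) x $$ (i, j)
      = (M_eval m \<rho> (x ^ L) * M_eval m \<tau> x) $$ (i, j)"
    using i j by (simp add: M_eval_index)
qed (simp_all add: M_eval_def)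

lemma M_eval_morph_pow_add:
  fixes x :: "'a::comm_ring_1"
  assumes "uniform_morphism m q \<sigma>"
  shows "M_eval m (morph_pow \<sigma> (a + b)) x
       = M_eval m (morph_pow \<sigma> b) (x ^ (q ^ a)) * M_eval m (morph_pow \<sigma> a) x"
proof -
  have "morph_pow \<sigma> (a + b) = (\<lambda>i. concat (map (morph_pow \<sigma> a) (morph_pow \<sigma> b i)))"
    by (intro ext) (rule morph_pow_add)
  moreover have "M_eval m (\<lambda>i. concat (map (morph_pow \<sigma> a) (morph_pow \<sigma> b i))) x
      = M_eval m (morph_pow \<sigma> b) (x ^ (q ^ a)) * M_eval m (morph_pow \<sigma> a) x"
    using uniform_morphism_morph_pow[OF assms]
    by (intro M_eval_concat_uniform) (simp_all add: uniform_morphism_def)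
  ultimately show ?thesis by simp
qed

lemma M_eval_morph_pow_mult:
  fixes x :: "'a::comm_ring_1"
  assumes "uniform_morphism m q \<sigma>" and "x ^ (q ^ t) = x"
  shows "M_eval m (morph_pow \<sigma> (k * t)) x = M_eval m (morph_pow \<sigma> t) x ^\<^sub>m k"
proof (induction k)
  case 0
  then show ?case
    using M_eval_carrier[of m "morph_pow \<sigma> t" x] by (simp add: M_eval_morph_pow_0)
next
  case (Suc k)
  have "M_eval m (morph_pow \<sigma> (t + k * t)) x
      = M_eval m (morph_pow \<sigma> (k * t)) x * M_eval m (morph_pow \<sigma> t) x"
    using M_eval_morph_pow_add[OF assms(1), of t "k * t" x] assms(2) by simp
  then show ?case using Suc by (simp add: add.commute)
qed

theorem proposition4p14:
  fixes p t m k :: nat and \<sigma> :: "nat \<Rightarrow> nat list" and \<alpha> :: "'a::{field, finite}"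
  assumes "prime p"
    and "uniform_morphism m p \<sigma>"
    and "t > 0"
    and "card (UNIV :: 'a set) = p ^ t"
    and "k > 0"
  shows "M_eval m (morph_pow \<sigma> (k * t)) \<alpha> = (M_eval m (morph_pow \<sigma> t) \<alpha>) ^\<^sub>m k"
proof -
  have "\<alpha> ^ (p ^ t) = \<alpha>"
    using finite_field_pow_card[of \<alpha>] assms(4) by simp
  then show ?thesis
    using M_eval_morph_pow_mult[OF assms(2)] by blast
qed

end
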